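(* Let $\mathcal{H}=(\mathcal{V},\mathcal{E})$ be a PICOD hypergraph and suppose $\mathcal{V}$ is partitioned into the vertex sets $\mathcal{V}_1,\dots,\mathcal{V}_t$ of the connected components $\mathcal{H}_1=\mathcal{H}[\mathcal{V}_1],\dots,\mathcal{H}_t=\mathcal{H}[\mathcal{V}_t]$ of $\mathcal{H}$ (so every edge of $\mathcal{H}$ is contained in exactly one $\mathcal{V}_i$ and $\mathcal{H}=\bigcup_i \mathcal{H}_i$). Then for every prime power $q$, $$\beta_q(\mathcal{H})=\max_{i\in[t]}\beta_q(\mathcal{H}_i).$$
   Context: PICOD problem: a server holds $m$ messages $b_1,\dots,b_m\in\mathbb{F}_q$; there are $n$ clients, client $i$ having side-information $\{b_j: j\in S_i\}$, $S_i\subseteq[m]$, and request-set $R_i=[m]\setminus S_i$ (assumed non-empty); client $i$ wants any one message $b_j$ with $j\in R_i$. A PICOD scheme of length $\ell$ over $\mathbb{F}_q$ is an encoding map $\phi:\mathbb{F}_q^m\to\mathbb{F}_q^\ell$ (the $\ell$ broadcast symbols) such that for every client $i$ there is an index $j_i\in R_i$ and a function $\psi_i$ with $\psi_i(\phi(b),(b_k)_{k\in S_i})=b_{j_i}$ for all $b\in\mathbb{F}_q^m$. The PICOD hypergraph $\mathcal{H}$ has vertex set $[m]$ and edge set $\{R_i: i\in[n]\}$; every hypergraph defines a PICOD problem in this way. $\beta_q(\mathcal{H})$ is the minimum length of a PICOD scheme for $\mathcal{H}$ over $\mathbb{F}_q$ (equal to $0$ if there are no edges). For $\mathcal{S}\subseteq\mathcal{V}$,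 $\mathcal{H}[\mathcal{S}]$ is the hypergraph with vertex set $\mathcal{S}$ and edges $\{E\in\mathcal{E}: E\subseteq \mathcal{S}\}$. Two vertices are adjacent if some edge contains both. *)

theory Defs
  imports "HOL-Library.FuncSet"
begin

text \<open>A PICOD hypergraph: finite vertex set V (message indices), edge set E
(request sets), every edge a non-empty subset of V. Client with request set R
has side information V - R.\<close>

definition picod_hypergraph :: "'v set \<Rightarrow> 'v set set \<Rightarrow> bool" where
  "picod_hypergraph V E \<longleftrightarrow> finite V \<and> (\<forall>R\<in>E. R \<noteq> {} \<and> R \<subseteq> V)"

text \<open>Message vectors are the functions V \<rightarrow> F (extensional, i.e. undefined
outside V).\<close>

definition picod_scheme ::
  "'v set \<Rightarrow> 'v set set \<Rightarrow> nat \<Rightarrow> (('v \<Rightarrow> 'a) \<Rightarrow> 'a list) \<Rightarrow> bool" where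
  "picod_scheme V E l \<phi> \<longleftrightarrow>
     (\<forall>b \<in> V \<rightarrow>\<^sub>E UNIV. length (\<phi> b) = l) \<and>
     (\<forall>R\<in>E. \<exists>j\<in>R. \<exists>\<psi> :: 'a list \<Rightarrow> ('v \<Rightarrow> 'a) \<Rightarrow> 'a.
        \<forall>b \<in> V \<rightarrow>\<^sub>E UNIV. \<psi> (\<phi> b) (restrict b (V - R)) = b j)"

definition picod_beta :: "'a::{finite,field} itself \<Rightarrow> 'v set \<Rightarrow> 'v set set \<Rightarrow> nat" where
  "picod_beta _ V E = (LEAST l. \<exists>\<phi> :: ('v \<Rightarrow> 'a) \<Rightarrow> 'a list. picod_scheme V E l \<phi>)"

definition induced_edges :: "'v set set \<Rightarrow> 'v set \<Rightarrow> 'v set set" where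
  "induced_edges E S = {R \<in> E. R \<subseteq> S}"

definition hg_adjacent :: "'v set set \<Rightarrow> 'v \<Rightarrow> 'v \<Rightarrow> bool" where
  "hg_adjacent E u v \<longleftrightarrow> (\<exists>R\<in>E. u \<in> R \<and> v \<in> R)"

definition hg_components :: "'v set \<Rightarrow> 'v set set \<Rightarrow> 'v set set" where
  "hg_components V E = {{v \<in> V. (hg_adjacent E)\<^sup>*\<^sup>* u v} | u. u \<in> V}"

end

theory Submission
  imports Defs "HOL-Library.More_List" "HOL-Library.Disjoint_Sets"
begin

text \<open>A scheme for \<open>\<H>\<close> is already a scheme, with the same decoders, for every induced
subhypergraph, since a message vector on \<open>C \<subseteq> V\<close> is also one on \<open>V\<close>; hence
\<open>\<beta>(\<H>[C]) \<le> \<beta>(\<H>)\<close>. Conversely, every client's request set lies inside one connected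
component, and that client knows all messages of the other components. So broadcasting the
sum of the (zero-padded) optimal encodings of all components lets each client subtract the
contributions of the foreign components and decode within its own component, with length
\<open>max\<^sub>i \<beta>(\<H>\<^sub>i)\<close>.\<close>

lemma picod_scheme_send_all:
  assumes "picod_hypergraph V E"
  shows "\<exists>\<phi> :: ('v \<Rightarrow> 'a) \<Rightarrow> 'a list. picod_scheme V E (card V) \<phi>"
proof -
  obtain xs where xs: "set xs = V" "distinct xs"
    using assms finite_distinct_list unfolding picod_hypergraph_def by blast
  have "picod_scheme V E (card V) (\<lambda>b :: 'v \<Rightarrow> 'a. map b xs)"
    unfolding picod_scheme_def
  proof (intro conjI ballI)
    fix b :: "'v \<Rightarrow> 'a"
    show "length (map b xs) = card V" using xs distinct_card by fastforce
  next
    fix R assume "R \<in> E"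
    then obtain j where j: "j \<in> R" "j \<in> V"
      using assms unfolding picod_hypergraph_def by blast
    then obtain i where "i < length xs" "xs ! i = j" using xs by (metis in_set_conv_nth)
    then show "\<exists>j\<in>R. \<exists>\<psi>. \<forall>b \<in> V \<rightarrow>\<^sub>E UNIV. \<psi> (map b xs) (restrict b (V - R)) = b j"
      using j by (intro bexI[of _ j] exI[of _ "\<lambda>w _. w ! i"]) auto
  qed
  then show ?thesis by blast
qed

lemma picod_beta_scheme:
  assumes "picod_hypergraph V E"
  shows "\<exists>\<phi> :: ('v \<Rightarrow> 'a::{finite,field}) \<Rightarrow> 'a list.
           picod_scheme V E (picod_beta TYPE('a) V E) \<phi>"
  using picod_scheme_send_all[OF assms] unfolding picod_beta_def by (rule LeastI_ex[OF exI])

lemma picod_beta_le: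
  assumes "picod_scheme V E l (\<phi> :: ('v \<Rightarrow> 'a::{finite,field}) \<Rightarrow> 'a list)"
  shows "picod_beta TYPE('a) V E \<le> l"
  unfolding picod_beta_def using assms by (intro Least_le) blast

lemma picod_hypergraph_induced:
  assumes "picod_hypergraph V E" "C \<subseteq> V"
  shows "picod_hypergraph C (induced_edges E C)"
  using assms finite_subset unfolding picod_hypergraph_def induced_edges_def by auto

lemma picod_scheme_induced:
  fixes \<phi> :: "('v \<Rightarrow> 'a) \<Rightarrow> 'a list"
  assumes "C \<subseteq> V" and scheme: "picod_scheme V E l \<phi>"
  shows "picod_scheme C (induced_edges E C) l \<phi>"
proof -
  have ext: "b \<in> V \<rightarrow>\<^sub>E UNIV" if "b \<in> C \<rightarrow>\<^sub>E UNIV" for b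
    using that \<open>C \<subseteq> V\<close> by (auto simp: PiE_iff extensional_def)
  have side_info: "restrict b (V - R) = restrict b (C - R)" if "b \<in> C \<rightarrow>\<^sub>E UNIV" for b R
    using that \<open>C \<subseteq> V\<close> by (auto simp: restrict_def PiE_iff extensional_def fun_eq_iff)
  show ?thesis
    unfolding picod_scheme_def
  proof (intro conjI ballI)
    fix b :: "'v \<Rightarrow> 'a" assume "b \<in> C \<rightarrow>\<^sub>E UNIV"
    then show "length (\<phi> b) = l" using scheme ext unfolding picod_scheme_def by blast
  next
    fix R assume "R \<in> induced_edges E C"
    then have "R \<in> E" by (simp add: induced_edges_def)
    then obtain j \<psi> where "j \<in> R"
      and \<psi>: "\<forall>b \<in> V \<rightarrow>\<^sub>E UNIV. \<psi> (\<phi> b) (restrict b (V - R)) = b j"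
      using scheme unfolding picod_scheme_def by blast
    show "\<exists>j\<in>R. \<exists>\<psi>. \<forall>b \<in> C \<rightarrow>\<^sub>E UNIV. \<psi> (\<phi> b) (restrict b (C - R)) = b j"
    proof (intro bexI[OF _ \<open>j \<in> R\<close>] exI[of _ \<psi>] ballI)
      fix b :: "'v \<Rightarrow> 'a" assume "b \<in> C \<rightarrow>\<^sub>E UNIV"
      then show "\<psi> (\<phi> b) (restrict b (C - R)) = b j"
        using \<psi> ext side_info by metis
    qed
  qed
qed

lemma picod_beta_induced_le:
  fixes V :: "'v set"
  assumes "picod_hypergraph V E" "C \<subseteq> V"
  shows "picod_beta TYPE('a::{finite,field}) C (induced_edges E C) \<le> picod_beta TYPE('a) V E"
proof -
  obtain \<phi> :: "('v \<Rightarrow> 'a) \<Rightarrow> 'a list" where "picod_scheme V E (picod_beta TYPE('a) V E) \<phi>"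
    using picod_beta_scheme[OF assms(1)] by blast
  then show ?thesis by (rule picod_beta_le[OF picod_scheme_induced[OF assms(2)]])
qed

definition superpose :: "'i set \<Rightarrow> ('i \<Rightarrow> 'a::ab_group_add list) \<Rightarrow> nat \<Rightarrow> 'a list" where
  "superpose I xs n = map (\<lambda>k. \<Sum>i\<in>I. nth_default 0 (xs i) k) [0..<n]"

lemma length_superpose [simp]: "length (superpose I xs n) = n"
  by (simp add: superpose_def)

lemma take_superpose_cancel:
  assumes "finite I" "i \<in> I" "length (xs i) \<le> n"
  shows "take (length (xs i))
           (map (\<lambda>k. superpose I xs n ! k - (\<Sum>j\<in>I - {i}. nth_default 0 (xs j) k)) [0..<n])
         = xs i"
proof -
  have cancel: "map (\<lambda>k. superpose I xs n ! k - (\<Sum>j\<in>I - {i}. nth_default 0 (xs j) k)) [0..<n]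
        = map (nth_default 0 (xs i)) [0..<n]"
    using assms(1,2) by (simp add: superpose_def sum.remove)
  show ?thesis
    unfolding cancel using assms(3) by (simp add: take_map min_absorb1 map_nth_default)
qed

lemma picod_scheme_disjoint_parts:
  fixes K :: "'v set set" and l :: "'v set \<Rightarrow> nat"
  assumes "finite K" "disjoint K"
    and parts_subset: "\<And>C. C \<in> K \<Longrightarrow> C \<subseteq> V"
    and edges_in_parts: "\<And>R. R \<in> E \<Longrightarrow> \<exists>C\<in>K. R \<subseteq> C"
    and lengths: "\<And>C. C \<in> K \<Longrightarrow> l C \<le> L"
    and schemes: "\<And>C. C \<in> K \<Longrightarrow>
                    \<exists>\<phi> :: ('v \<Rightarrow> 'a::ab_group_add) \<Rightarrow> 'a list. picod_scheme C (induced_edges E C) (l C) \<phi>"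
  shows "\<exists>\<phi> :: ('v \<Rightarrow> 'a) \<Rightarrow> 'a list. picod_scheme V E L \<phi>"
proof -
  obtain F :: "'v set \<Rightarrow> ('v \<Rightarrow> 'a) \<Rightarrow> 'a list"
    where F: "\<And>C. C \<in> K \<Longrightarrow> picod_scheme C (induced_edges E C) (l C) (F C)"
    using schemes by metis
  define enc where "enc b = superpose K (\<lambda>C. F C (restrict b C)) L" for b
  have "picod_scheme V E L enc"
    unfolding picod_scheme_def
  proof (intro conjI ballI)
    fix b :: "'v \<Rightarrow> 'a" show "length (enc b) = L" by (simp add: enc_def)
  next
    fix R assume "R \<in> E"
    then obtain C0 where C0: "C0 \<in> K" "R \<subseteq> C0" using edges_in_parts by blast
    then have "R \<in> induced_edges E C0" using \<open>R \<in> E\<close> by (simp add: induced_edges_def)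
    then have "\<exists>j\<in>R. \<exists>\<psi>. \<forall>b \<in> C0 \<rightarrow>\<^sub>E UNIV. \<psi> (F C0 b) (restrict b (C0 - R)) = b j"
      using F[OF C0(1)] unfolding picod_scheme_def by blast
    then obtain j \<psi> where "j \<in> R"
      and \<psi>: "\<And>b. b \<in> C0 \<rightarrow>\<^sub>E UNIV \<Longrightarrow> \<psi> (F C0 b) (restrict b (C0 - R)) = b j"
      by blast
    define others where "others s k = (\<Sum>C\<in>K - {C0}. nth_default 0 (F C (restrict s C)) k)" for s k
    define \<psi>' where
      "\<psi>' w s = \<psi> (take (l C0) (map (\<lambda>k. w ! k - others s k) [0..<L])) (restrict s (C0 - R))"
      for w s
    show "\<exists>j\<in>R. \<exists>\<psi>. \<forall>b \<in> V \<rightarrow>\<^sub>E UNIV. \<psi> (enc b) (restrict b (V - R)) = b j"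
    proof (intro bexI[OF _ \<open>j \<in> R\<close>] exI[of _ \<psi>'] ballI)
      fix b :: "'v \<Rightarrow> 'a"
      \<comment> \<open>the other parts are disjoint from \<open>C0 \<supseteq> R\<close>, so the client knows their messages\<close>
      have "restrict (restrict b (V - R)) C = restrict b C" if "C \<in> K - {C0}" for C
      proof -
        have "C \<subseteq> V - R"
          using that C0 parts_subset \<open>disjoint K\<close> by (fastforce dest: disjointD)
        then show ?thesis by (auto simp: restrict_def fun_eq_iff)
      qed
      then have known: "others (restrict b (V - R)) = others b"
        by (auto simp: others_def intro!: sum.cong)
      have "length (F C0 (restrict b C0)) = l C0"
        using F[OF C0(1)] unfolding picod_scheme_def by simp
      then have decoded: "take (l C0) (map (\<lambda>k. enc b ! k - others b k) [0..<L]) = F C0 (restrict b C0)"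
        using take_superpose_cancel[OF \<open>finite K\<close> C0(1), of "\<lambda>C. F C (restrict b C)" L]
          lengths[OF C0(1)] unfolding enc_def others_def by simp
      have own_side_info: "restrict (restrict b (V - R)) (C0 - R) = restrict (restrict b C0) (C0 - R)"
        using parts_subset[OF C0(1)] by (auto simp: restrict_def fun_eq_iff)
      have "\<psi>' (enc b) (restrict b (V - R)) = \<psi> (F C0 (restrict b C0)) (restrict (restrict b C0) (C0 - R))"
        unfolding \<psi>'_def known decoded own_side_info ..
      also have "\<dots> = b j"
        using \<psi>[of "restrict b C0"] \<open>j \<in> R\<close> C0(2) by auto
      finally show "\<psi>' (enc b) (restrict b (V - R)) = b j" .
    qed
  qed
  then show ?thesis by blast
qed

lemma hg_component_subset: "C \<in> hg_components V E \<Longrightarrow> C \<subseteq> V"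
  unfolding hg_components_def by auto

lemma finite_hg_components: "finite V \<Longrightarrow> finite (hg_components V E)"
  unfolding hg_components_def by simp

lemma hg_components_nonempty: "V \<noteq> {} \<Longrightarrow> hg_components V E \<noteq> {}"
  unfolding hg_components_def by blast

lemma disjoint_hg_components: "disjoint (hg_components V E)"
proof (rule disjointI)
  let ?conn = "(hg_adjacent E)\<^sup>*\<^sup>*"
  have sym: "symp ?conn"
    by (rule symp_rtranclp) (auto simp: symp_def hg_adjacent_def)
  fix C1 C2 assume "C1 \<in> hg_components V E" "C2 \<in> hg_components V E" "C1 \<noteq> C2"
  then obtain u1 u2 where C: "C1 = {v \<in> V. ?conn u1 v}" "C2 = {v \<in> V. ?conn u2 v}"
    unfolding hg_components_def by blast
  show "C1 \<inter> C2 = {}"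
  proof (rule ccontr)
    assume "C1 \<inter> C2 \<noteq> {}"
    then obtain x where "?conn u1 x" "?conn u2 x" using C by blast
    then have "?conn u1 u2" "?conn u2 u1"
      using sym by (meson rtranclp_trans sympD)+
    then have "C1 = C2" unfolding C by (auto intro: rtranclp_trans)
    with \<open>C1 \<noteq> C2\<close> show False ..
  qed
qed

lemma edge_subset_hg_component:
  assumes "R \<in> E" "R \<noteq> {}" "R \<subseteq> V"
  shows "\<exists>C\<in>hg_components V E. R \<subseteq> C"
proof -
  obtain u where "u \<in> R" using assms(2) by blast
  then have "R \<subseteq> {v \<in> V. (hg_adjacent E)\<^sup>*\<^sup>* u v}"
    using assms(1,3) by (auto simp: hg_adjacent_def intro!: r_into_rtranclp)
  moreover have "{v \<in> V. (hg_adjacent E)\<^sup>*\<^sup>* u v} \<in> hg_components V E"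
    using \<open>u \<in> R\<close> assms(3) unfolding hg_components_def by blast
  ultimately show ?thesis by blast
qed

theorem proposition1:
  fixes V :: "'v set" and E :: "'v set set"
  assumes "picod_hypergraph V E" and "V \<noteq> {}"
  shows "picod_beta TYPE('a::{finite,field}) V E =
         Max ((\<lambda>C. picod_beta TYPE('a) C (induced_edges E C)) ` hg_components V E)"
proof -
  let ?K = "hg_components V E"
  let ?\<beta> = "\<lambda>C. picod_beta TYPE('a) C (induced_edges E C)"
  have finite_V: "finite V" and edges: "\<And>R. R \<in> E \<Longrightarrow> R \<noteq> {} \<and> R \<subseteq> V"
    using assms(1) unfolding picod_hypergraph_def by auto
  have "finite ?K" "?K \<noteq> {}"
    using finite_hg_components[OF finite_V] hg_components_nonempty[OF assms(2)] .
  have "\<exists>\<phi> :: ('v \<Rightarrow> 'a) \<Rightarrow> 'a list. picod_scheme V E (Max (?\<beta> ` ?K)) \<phi>"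
  proof (rule picod_scheme_disjoint_parts[OF \<open>finite ?K\<close> disjoint_hg_components])
    show "\<exists>C\<in>?K. R \<subseteq> C" if "R \<in> E" for R
      using edge_subset_hg_component[OF that] edges[OF that] by blast
    show "\<exists>\<phi> :: ('v \<Rightarrow> 'a) \<Rightarrow> 'a list. picod_scheme C (induced_edges E C) (?\<beta> C) \<phi>"
      if "C \<in> ?K" for C
      by (rule picod_beta_scheme[OF picod_hypergraph_induced[OF assms(1) hg_component_subset[OF that]]])
    show "?\<beta> C \<le> Max (?\<beta> ` ?K)" if "C \<in> ?K" for C
      using \<open>finite ?K\<close> that by simp
  qed (rule hg_component_subset)
  then have "picod_beta TYPE('a) V E \<le> Max (?\<beta> ` ?K)"
    by (auto intro: picod_beta_le)
  moreover have "Max (?\<beta> ` ?K) \<le> picod_beta TYPE('a) V E"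
    using \<open>finite ?K\<close> \<open>?K \<noteq> {}\<close>
    by (simp add: picod_beta_induced_le[OF assms(1) hg_component_subset])
  ultimately show ?thesis by (rule antisym)
qed

end
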